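(* Let $\xi:I\to\mathbb{R}^3$ be a smooth arclength-parametrized curve with curvature $k>0$ and torsion $\tau\neq0$ on $I$, and let $t_0\in I$. Then there exists $\delta>0$ such that for every $t\in I$ with $0<|t-t_0|<\delta$, the osculating circle of $\xi$ at $\xi(t_0)$ is disjoint from the osculating plane of $\xi$ at $\xi(t)$. In particular, for such $t$ the osculating circles of $\xi$ at $\xi(t_0)$ and at $\xi(t)$ are not linked.
   Context: The osculating plane of $\xi$ at $\xi(t)$ is $\xi(t)+\operatorname{span}(\mathbf{t}(t),\mathbf{n}(t))$, where $\mathbf{t}=\xi'$ and $\mathbf{n}=\xi''/k$. The osculating circle at $\xi(t)$ is the circle in this plane with center $\xi(t)+\frac1{k(t)}\mathbf{n}(t)$ and radius $1/k(t)$. *)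

theory Defs
  imports "HOL-Analysis.Analysis"
begin

fun vderiv :: "nat \<Rightarrow> real set \<Rightarrow> (real \<Rightarrow> real^3) \<Rightarrow> real \<Rightarrow> real^3" where
  "vderiv 0 I f = f"
| "vderiv (Suc n) I f = (\<lambda>t. vector_derivative (vderiv n I f) (at t within I))"

definition smooth_curve_on :: "real set \<Rightarrow> (real \<Rightarrow> real^3) \<Rightarrow> bool" where
  "smooth_curve_on I f \<longleftrightarrow>
     (\<forall>n. \<forall>t\<in>I. (vderiv n I f has_vector_derivative vderiv (Suc n) I f t) (at t within I))"

definition arclength_param :: "real set \<Rightarrow> (real \<Rightarrow> real^3) \<Rightarrow> bool" where
  "arclength_param I f \<longleftrightarrow> (\<forall>t\<in>I. norm (vderiv 1 I f t) = 1)"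

definition tangent :: "real set \<Rightarrow> (real \<Rightarrow> real^3) \<Rightarrow> real \<Rightarrow> real^3" where
  "tangent I f t = vderiv 1 I f t"

definition curvature :: "real set \<Rightarrow> (real \<Rightarrow> real^3) \<Rightarrow> real \<Rightarrow> real" where
  "curvature I f t = norm (vderiv 2 I f t)"

definition normal :: "real set \<Rightarrow> (real \<Rightarrow> real^3) \<Rightarrow> real \<Rightarrow> real^3" where
  "normal I f t = (1 / curvature I f t) *\<^sub>R vderiv 2 I f t"

text \<open>Torsion of an arclength-parametrized curve: tau = det(xi', xi'', xi''') / k^2.\<close>
definition torsion :: "real set \<Rightarrow> (real \<Rightarrow> real^3) \<Rightarrow> real \<Rightarrow> real" where
  "torsion I f t = ((cross3 (vderiv 1 I f t) (vderiv 2 I f t)) \<bullet> vderiv 3 I f t)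
                     / (curvature I f t)^2"

definition osculating_plane :: "real set \<Rightarrow> (real \<Rightarrow> real^3) \<Rightarrow> real \<Rightarrow> (real^3) set" where
  "osculating_plane I f t =
     {f t + a *\<^sub>R tangent I f t + b *\<^sub>R normal I f t | a b. True}"

definition osculating_center :: "real set \<Rightarrow> (real \<Rightarrow> real^3) \<Rightarrow> real \<Rightarrow> real^3" where
  "osculating_center I f t = f t + (1 / curvature I f t) *\<^sub>R normal I f t"

definition osculating_circle :: "real set \<Rightarrow> (real \<Rightarrow> real^3) \<Rightarrow> real \<Rightarrow> (real^3) set" where
  "osculating_circle I f t =
     {p \<in> osculating_plane I f t. dist p (osculating_center I f t) = 1 / curvature I f t}"

definition osculating_disk :: "real set \<Rightarrow> (real \<Rightarrow> real^3) \<Rightarrow> real \<Rightarrow> (real^3) set" where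
  "osculating_disk I f t =
     {p \<in> osculating_plane I f t. dist p (osculating_center I f t) \<le> 1 / curvature I f t}"

end

(*
  Write s = t - t0, let T, K, J be the first three derivatives of \<xi> at t0 and
  w(t) = \<xi>'(t) \<times> \<xi>''(t), a normal vector of the osculating plane at t. A point
  \<xi>(t0) + a T + b N of the osculating plane at t0 lies in the osculating plane at t iff
  e + a A + b B/k = 0, where e = (\<xi>(t0) - \<xi>(t)) \<bullet> w, A = T \<bullet> w and B = K \<bullet> w. As the
  osculating circle is the circle of radius 1/k about \<xi>(t0) + N/k in the (T,N)-plane,
  Cauchy-Schwarz shows that this line meets it only if k\<^sup>2 e\<^sup>2 + 2 e B - A\<^sup>2 \<le> 0.
  Iterated L'Hopital gives e ~ -\<tau> s\<^sup>3/6, A ~ \<tau> s\<^sup>2/2 and B ~ -\<tau> s, where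
  \<tau> = (T \<times> K) \<bullet> J = k\<^sup>2 \<cdot> torsion \<noteq> 0. So the discriminant is \<tau>\<^sup>2 s\<^sup>4 (1/3 - 1/4) + o(s\<^sup>4),
  positive for small s \<noteq> 0. The osculating disk lies in the osculating plane.
*)

theory Submission
  imports Defs
begin

unbundle cross3_syntax

lemma tendsto_div_power_one_sided:
  fixes g :: "nat \<Rightarrow> real \<Rightarrow> real"
  assumes F: "F = at_left t0 \<or> F = at_right t0"
    and deriv: "\<forall>\<^sub>F x in F. \<forall>m<n. (g m has_real_derivative g (Suc m) x) (at x)"
    and vanish: "\<forall>m<n. (g m \<longlongrightarrow> 0) F"
    and lim: "(g n \<longlongrightarrow> c) F"
  shows "((\<lambda>x. g 0 x / (x - t0)^n) \<longlongrightarrow> c / fact n) F"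
  using deriv vanish lim
proof (induction n arbitrary: g c)
  case 0
  then show ?case by simp
next
  case (Suc n)
  have "\<forall>\<^sub>F x in F. \<forall>m<n. (g (Suc m) has_real_derivative g (Suc (Suc m)) x) (at x)"
    using Suc.prems(1) by (auto elim!: eventually_mono)
  then have "((\<lambda>x. g 1 x / (x - t0)^n) \<longlongrightarrow> c / fact n) F"
    using Suc.IH[of "\<lambda>m. g (Suc m)" c] Suc.prems(2,3) by simp
  then have lim_quotient: "((\<lambda>x. g 1 x / (real (Suc n) * (x - t0)^n)) \<longlongrightarrow> c / fact (Suc n)) F"
    by (auto dest: tendsto_divide[OF _ tendsto_const, of _ _ _ "real (Suc n)"]
             simp: field_simps fact_Suc)
  have off_t0: "\<forall>\<^sub>F x in F. x \<noteq> t0"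
    using F by (auto simp: eventually_at_filter)
  have "((\<lambda>x. (x - t0)^Suc n) \<longlongrightarrow> (t0 - t0)^Suc n) F"
    using F by (auto intro!: tendsto_eq_intros)
  then have power_lim: "((\<lambda>x. (x - t0)^Suc n) \<longlongrightarrow> 0) F"
    by simp
  have power_deriv: "\<forall>\<^sub>F x in F. ((\<lambda>x. (x - t0)^Suc n) has_real_derivative real (Suc n) * (x - t0)^n) (at x)"
    by (intro always_eventually allI) (auto intro!: derivative_eq_intros; cases n; simp add: algebra_simps)
  have g0_lim: "(g 0 \<longlongrightarrow> 0) F" and g0_deriv: "\<forall>\<^sub>F x in F. (g 0 has_real_derivative g 1 x) (at x)"
    using Suc.prems(1,2) by (auto elim!: eventually_mono)
  have power_nonzero: "\<forall>\<^sub>F x in F. (x - t0)^Suc n \<noteq> 0"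
    and power_deriv_nonzero: "\<forall>\<^sub>F x in F. real (Suc n) * (x - t0)^n \<noteq> 0"
    by (rule eventually_mono[OF off_t0], simp)+
  note lhopital_args = g0_lim power_lim power_nonzero power_deriv_nonzero g0_deriv power_deriv lim_quotient
  from F show ?case
  proof
    assume "F = at_left t0"
    with lhopital_left[OF lhopital_args[unfolded this]] show ?case by simp
  next
    assume "F = at_right t0"
    with lhopital_right[OF lhopital_args[unfolded this]] show ?case by simp
  qed
qed

lemma eventually_interior_or_outside_at_right:
  fixes I :: "real set"
  assumes "is_interval I" "t0 \<in> I"
  shows "(\<forall>\<^sub>F x in at_right t0. x \<in> interior I) \<or> (\<forall>\<^sub>F x in at_right t0. x \<notin> I)"
proof (cases "\<exists>b\<in>I. t0 < b")
  case True
  then obtain b where b: "b \<in> I" "t0 < b" by blast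
  have "{t0<..<b} \<subseteq> I"
    using is_interval_1[THEN iffD1, OF assms(1), rule_format, OF assms(2) b(1)] by auto
  then have "{t0<..<b} \<subseteq> interior I"
    by (intro interior_maximal) auto
  then show ?thesis
    using eventually_at_right_real[OF b(2)] by (auto elim!: eventually_mono)
next
  case False
  have "\<forall>\<^sub>F x in at_right t0. x \<notin> I"
    by (rule eventually_mono[OF eventually_at_right_real[of t0 "t0 + 1"]]) (use False in auto)
  then show ?thesis ..
qed

lemma eventually_interior_or_outside_at_left:
  fixes I :: "real set"
  assumes "is_interval I" "t0 \<in> I"
  shows "(\<forall>\<^sub>F x in at_left t0. x \<in> interior I) \<or> (\<forall>\<^sub>F x in at_left t0. x \<notin> I)"
proof (cases "\<exists>a\<in>I. a < t0")
  case True
  then obtain a where a: "a \<in> I" "a < t0" by blast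
  have "{a<..<t0} \<subseteq> I"
    using is_interval_1[THEN iffD1, OF assms(1), rule_format, OF a(1) assms(2)] by auto
  then have "{a<..<t0} \<subseteq> interior I"
    by (intro interior_maximal) auto
  then show ?thesis
    using eventually_at_left_real[OF a(2)] by (auto elim!: eventually_mono)
next
  case False
  have "\<forall>\<^sub>F x in at_left t0. x \<notin> I"
    by (rule eventually_mono[OF eventually_at_left_real[of "t0 - 1" t0]]) (use False in auto)
  then show ?thesis ..
qed

lemma eventually_at_within_interval_from_sides:
  fixes I :: "real set"
  assumes "is_interval I" "t0 \<in> I"
    and left: "\<forall>\<^sub>F x in at_left t0. x \<in> interior I \<Longrightarrow> eventually P (at_left t0)"
    and right: "\<forall>\<^sub>F x in at_right t0. x \<in> interior I \<Longrightarrow> eventually P (at_right t0)"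
  shows "eventually P (at t0 within I)"
proof -
  have "\<forall>\<^sub>F x in at_left t0. x \<in> I \<longrightarrow> P x"
    using eventually_interior_or_outside_at_left[OF assms(1,2)]
    by (metis (mono_tags, lifting) eventually_mono left)
  moreover have "\<forall>\<^sub>F x in at_right t0. x \<in> I \<longrightarrow> P x"
    using eventually_interior_or_outside_at_right[OF assms(1,2)]
    by (metis (mono_tags, lifting) eventually_mono right)
  ultimately
  have "\<forall>\<^sub>F x in at t0. x \<in> I \<longrightarrow> P x"
    by (simp add: eventually_at_split)
  then show ?thesis
    by (simp add: eventually_at_filter)
qed

lemma one_sided_le_at_within:
  fixes t0 :: real
  assumes F: "F = at_left t0 \<or> F = at_right t0" and in_I: "\<forall>\<^sub>F x in F. x \<in> I"
  shows "F \<le> at t0 within I"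
proof (rule filter_leI)
  fix P assume "eventually P (at t0 within I)"
  then have "\<forall>\<^sub>F x in at t0. x \<in> I \<longrightarrow> P x"
    by (simp add: eventually_at_filter)
  then have "\<forall>\<^sub>F x in F. x \<in> I \<longrightarrow> P x"
    using F unfolding eventually_at_split by blast
  with in_I show "eventually P F"
    by eventually_elim blast
qed

text \<open>L'Hopital needs genuine two-sided derivatives. Derivatives within I are such at interior
  points, so the limit within I is assembled from the one-sided limits on those sides of t0 on
  which I extends.\<close>

lemma tendsto_div_power_at_within_interval:
  fixes g :: "nat \<Rightarrow> real \<Rightarrow> real"
  assumes I: "is_interval I" "t0 \<in> I"
    and deriv: "\<And>m x. m < n \<Longrightarrow> x \<in> I \<Longrightarrow> (g m has_real_derivative g (Suc m) x) (at x within I)"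
    and vanish: "\<And>m. m < n \<Longrightarrow> g m t0 = 0"
    and cont: "continuous (at t0 within I) (g n)"
  shows "((\<lambda>x. g 0 x / (x - t0)^n) \<longlongrightarrow> g n t0 / fact n) (at t0 within I)"
proof -
  have cont_below: "continuous (at t0 within I) (g m)" if "m \<le> n" for m
  proof (cases "m = n")
    case False
    with that show ?thesis
      using DERIV_continuous[OF deriv[OF _ I(2)]] by simp
  qed (use cont in simp)
  have one_sided: "((\<lambda>x. g 0 x / (x - t0)^n) \<longlongrightarrow> g n t0 / fact n) F"
    if F: "F = at_left t0 \<or> F = at_right t0" and int: "\<forall>\<^sub>F x in F. x \<in> interior I" for F
  proof (rule tendsto_div_power_one_sided[OF F])
    have "\<forall>\<^sub>F x in F. x \<in> I"
      using int by eventually_elim (use interior_subset in blast)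
    with F have F_le: "F \<le> at t0 within I"
      by (rule one_sided_le_at_within)
    have lim: "(g m \<longlongrightarrow> g m t0) F" if "m \<le> n" for m
      using cont_below[OF that] unfolding continuous_within by (rule tendsto_mono[OF F_le])
    then show "(g n \<longlongrightarrow> g n t0) F"
      by blast
    show "\<forall>m<n. (g m \<longlongrightarrow> 0) F"
    proof (intro allI impI)
      fix m assume "m < n"
      then show "(g m \<longlongrightarrow> 0) F"
        using lim[of m] vanish[of m] by simp
    qed
    show "\<forall>\<^sub>F x in F. \<forall>m<n. (g m has_real_derivative g (Suc m) x) (at x)"
      using int
    proof eventually_elim
      case (elim x)
      then have "x \<in> I"
        using interior_subset by blast
      moreover have "at x within I = at x"
        using elim by (rule at_within_interior)
      ultimately show ?case
        using deriv by metis
    qed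
  qed
  show ?thesis
    unfolding tendsto_iff
  proof (intro allI impI)
    fix \<epsilon> :: real assume "\<epsilon> > 0"
    then show "\<forall>\<^sub>F x in at t0 within I. dist (g 0 x / (x - t0)^n) (g n t0 / fact n) < \<epsilon>"
      using one_sided by (intro eventually_at_within_interval_from_sides[OF I]) (auto simp: tendsto_iff)
  qed
qed

lemma tendsto_inner_div_power_at_within_interval:
  fixes V :: "nat \<Rightarrow> real \<Rightarrow> 'a::real_inner"
  assumes I: "is_interval I" "t0 \<in> I"
    and deriv: "\<And>m x. m < n \<Longrightarrow> x \<in> I \<Longrightarrow> (V m has_vector_derivative V (Suc m) x) (at x within I)"
    and vanish: "\<And>m. m < n \<Longrightarrow> c \<bullet> V m t0 = 0"
    and cont: "continuous (at t0 within I) (V n)"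
  shows "((\<lambda>x. c \<bullet> V 0 x / (x - t0)^n) \<longlongrightarrow> c \<bullet> V n t0 / fact n) (at t0 within I)"
proof (rule tendsto_div_power_at_within_interval[OF I, where g = "\<lambda>m x. c \<bullet> V m x"])
  fix m x assume "m < n" "x \<in> I"
  from bounded_bilinear.has_vector_derivative[OF bounded_bilinear_inner
      has_vector_derivative_const deriv[OF this]]
  show "((\<lambda>x. c \<bullet> V m x) has_real_derivative c \<bullet> V (Suc m) x) (at x within I)"
    by (simp add: has_real_derivative_iff_has_vector_derivative)
qed (use vanish cont in \<open>auto intro: continuous_inner continuous_const\<close>)

lemma has_vector_derivative_cross3:
  fixes f g :: "real \<Rightarrow> real^3"
  assumes "(f has_vector_derivative f') (at x within S)" "(g has_vector_derivative g') (at x within S)"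
  shows "((\<lambda>x. f x \<times> g x) has_vector_derivative f x \<times> g' + f' \<times> g x) (at x within S)"
  using bounded_bilinear.has_vector_derivative[OF bilinear_cross[unfolded bilinear_conv_bounded_bilinear] assms] .

lemma inner_unit_vector_derivative_eq_0:
  fixes f :: "real \<Rightarrow> 'a::real_inner"
  assumes unit: "\<And>t. t \<in> I \<Longrightarrow> norm (f t) = 1" and "t0 \<in> I" "at t0 within I \<noteq> bot"
    and deriv: "(f has_vector_derivative f') (at t0 within I)"
  shows "f t0 \<bullet> f' = 0"
proof -
  have "((\<lambda>t. f t \<bullet> f t) has_vector_derivative f t0 \<bullet> f' + f' \<bullet> f t0) (at t0 within I)"
    using bounded_bilinear.has_vector_derivative[OF bounded_bilinear_inner deriv deriv] .
  moreover have "((\<lambda>t. f t \<bullet> f t) has_vector_derivative 0) (at t0 within I)"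
    using unit by (intro has_vector_derivative_transform[OF \<open>t0 \<in> I\<close> _ has_vector_derivative_const])
      (simp add: norm_eq_1)
  ultimately have "f t0 \<bullet> f' + f' \<bullet> f t0 = 0"
    by (rule vector_derivative_unique_within[OF \<open>at t0 within I \<noteq> bot\<close>])
  then show ?thesis
    by (simp add: inner_commute)
qed

text \<open>For \<open>m \<le> 3\<close>, \<open>cross_jet d m\<close> is the \<open>m\<close>-th derivative of \<open>d 1 \<times> d 2\<close> when \<open>d (Suc m)\<close> is the
  derivative of \<open>d m\<close> (the term \<open>d 3 \<times> d 3 = 0\<close> is dropped); larger \<open>m\<close> give junk.\<close>

definition cross_jet :: "(nat \<Rightarrow> real \<Rightarrow> real^3) \<Rightarrow> nat \<Rightarrow> real \<Rightarrow> real^3" where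
  "cross_jet d m = [\<lambda>t. d 1 t \<times> d 2 t, \<lambda>t. d 1 t \<times> d 3 t, \<lambda>t. d 1 t \<times> d 4 t + d 2 t \<times> d 3 t,
                    \<lambda>t. d 1 t \<times> d 5 t + 2 *\<^sub>R (d 2 t \<times> d 4 t)] ! m"

lemma less_3_cases_iff: "m < 3 \<longleftrightarrow> m = 0 \<or> m = 1 \<or> m = (2::nat)"
  by auto

lemma cross_jet_has_vector_derivative:
  fixes d :: "nat \<Rightarrow> real \<Rightarrow> real^3"
  assumes d: "\<And>k. (d k has_vector_derivative d (Suc k) t) (at t within I)" and "m < 3"
  shows "(cross_jet d m has_vector_derivative cross_jet d (Suc m) t) (at t within I)"
proof -
  have d1: "(d 1 has_vector_derivative d 2 t) (at t within I)"
    and d2: "(d 2 has_vector_derivative d 3 t) (at t within I)"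
    and d3: "(d 3 has_vector_derivative d 4 t) (at t within I)"
    and d4: "(d 4 has_vector_derivative d 5 t) (at t within I)"
    using d[of "Suc 0"] d[of 2] d[of 3] d[of 4] by (simp_all add: numeral_eq_Suc)
  have "((\<lambda>t. d 1 t \<times> d 4 t + d 2 t \<times> d 3 t)
           has_vector_derivative d 1 t \<times> d 5 t + 2 *\<^sub>R (d 2 t \<times> d 4 t)) (at t within I)"
    using has_vector_derivative_add[OF has_vector_derivative_cross3[OF d1 d4]
        has_vector_derivative_cross3[OF d2 d3]]
    by (simp add: scaleR_2 cross_skew[of "d 3 t" "d 2 t"] add.commute)
  with \<open>m < 3\<close> show ?thesis
    using has_vector_derivative_cross3[OF d1 d2] has_vector_derivative_cross3[OF d1 d3]
    unfolding less_3_cases_iff by (auto simp: cross_jet_def)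
qed

lemma cross_jet_continuous:
  fixes d :: "nat \<Rightarrow> real \<Rightarrow> real^3"
  assumes "\<And>k. continuous F (d k)" and "m \<le> 3"
  shows "continuous F (cross_jet d m)"
  using assms(2) unfolding le_less less_3_cases_iff
  by (auto simp: cross_jet_def intro!: continuous_intros continuous_cross assms(1))

lemma cross_chain_inner_frame_tendsto:
  fixes d :: "nat \<Rightarrow> real \<Rightarrow> real^3"
  assumes I: "is_interval I" "t0 \<in> I"
    and d: "\<forall>m. \<forall>t\<in>I. (d m has_vector_derivative d (Suc m) t) (at t within I)"
  shows "((\<lambda>t. d 1 t0 \<bullet> (d 1 t \<times> d 2 t) / (t - t0)^2) \<longlongrightarrow> ((d 1 t0 \<times> d 2 t0) \<bullet> d 3 t0) / 2)
           (at t0 within I)"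
    and "((\<lambda>t. d 2 t0 \<bullet> (d 1 t \<times> d 2 t) / (t - t0)) \<longlongrightarrow> - ((d 1 t0 \<times> d 2 t0) \<bullet> d 3 t0))
           (at t0 within I)"
proof -
  have jet_deriv: "(cross_jet d m has_vector_derivative cross_jet d (Suc m) x) (at x within I)"
    if "m < 2" "x \<in> I" for m x
    using cross_jet_has_vector_derivative[where d = d, OF d[rule_format, OF that(2)]] that(1) by simp
  have jet_cont: "continuous (at t0 within I) (cross_jet d m)" if "m \<le> 2" for m
    using d[rule_format, OF I(2)] that
    by (intro cross_jet_continuous has_vector_derivative_continuous) auto
  have triple: "(d 1 t0 \<times> d 2 t0) \<bullet> d 3 t0 = d 1 t0 \<bullet> (d 2 t0 \<times> d 3 t0)"
    and triple': "d 2 t0 \<bullet> (d 1 t0 \<times> d 3 t0) = - ((d 1 t0 \<times> d 2 t0) \<bullet> d 3 t0)"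
    by (simp_all add: cross3_simps)
  have "((\<lambda>t. d 1 t0 \<bullet> cross_jet d 0 t / (t - t0)^2) \<longlongrightarrow> d 1 t0 \<bullet> cross_jet d 2 t0 / fact 2)
          (at t0 within I)"
  proof (rule tendsto_inner_div_power_at_within_interval[OF I])
    show "d 1 t0 \<bullet> cross_jet d m t0 = 0" if "m < 2" for m
      using that by (auto simp: cross_jet_def less_2_cases_iff dot_cross_self)
  qed (use jet_deriv jet_cont in auto)
  then show "((\<lambda>t. d 1 t0 \<bullet> (d 1 t \<times> d 2 t) / (t - t0)^2) \<longlongrightarrow> ((d 1 t0 \<times> d 2 t0) \<bullet> d 3 t0) / 2)
          (at t0 within I)"
    unfolding triple by (simp add: cross_jet_def dot_cross_self inner_add_right)
  have "((\<lambda>t. d 2 t0 \<bullet> cross_jet d 0 t / (t - t0)^1) \<longlongrightarrow> d 2 t0 \<bullet> cross_jet d 1 t0 / fact 1)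
          (at t0 within I)"
  proof (rule tendsto_inner_div_power_at_within_interval[OF I])
    show "d 2 t0 \<bullet> cross_jet d m t0 = 0" if "m < 1" for m
      using that by (simp add: cross_jet_def dot_cross_self)
  qed (use jet_deriv jet_cont in auto)
  then show "((\<lambda>t. d 2 t0 \<bullet> (d 1 t \<times> d 2 t) / (t - t0)) \<longlongrightarrow> - ((d 1 t0 \<times> d 2 t0) \<bullet> d 3 t0))
          (at t0 within I)"
    unfolding triple'[symmetric] by (simp add: cross_jet_def)
qed

lemma cross_chain_inner_chord_tendsto:
  fixes d :: "nat \<Rightarrow> real \<Rightarrow> real^3"
  assumes I: "is_interval I" "t0 \<in> I"
    and d: "\<forall>m. \<forall>t\<in>I. (d m has_vector_derivative d (Suc m) t) (at t within I)"
  shows "((\<lambda>t. (d 0 t0 - d 0 t) \<bullet> (d 1 t \<times> d 2 t) / (t - t0)^3)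
           \<longlongrightarrow> - ((d 1 t0 \<times> d 2 t0) \<bullet> d 3 t0) / 6) (at t0 within I)"
proof -
  define chord where "chord t = d 0 t0 - d 0 t" for t
  \<comment> \<open>The product rule for \<open>chord \<bullet> cross_jet d m\<close> contributes \<open>- d 1 \<bullet> cross_jet d m\<close>, which
    vanishes for \<open>m < 2\<close> and so first appears in \<open>g ! 3\<close>.\<close>
  define g where "g = [\<lambda>t. chord t \<bullet> cross_jet d 0 t, \<lambda>t. chord t \<bullet> cross_jet d 1 t,
                        \<lambda>t. chord t \<bullet> cross_jet d 2 t,
                        \<lambda>t. chord t \<bullet> cross_jet d 3 t - d 1 t \<bullet> cross_jet d 2 t]"
  have chord_deriv: "(chord has_vector_derivative - d 1 x) (at x within I)" if "x \<in> I" for x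
    unfolding chord_def
    using has_vector_derivative_diff[OF has_vector_derivative_const d[rule_format, OF that]] by simp
  have inner_deriv: "((\<lambda>t. chord t \<bullet> cross_jet d m t)
          has_real_derivative chord x \<bullet> cross_jet d (Suc m) x - d 1 x \<bullet> cross_jet d m x) (at x within I)"
    if "m < 3" "x \<in> I" for m x
    using bounded_bilinear.has_vector_derivative[OF bounded_bilinear_inner chord_deriv[OF that(2)]
        cross_jet_has_vector_derivative[where d = d, OF d[rule_format, OF that(2)] that(1)]]
    by (simp add: has_real_derivative_iff_has_vector_derivative)
  have g_deriv: "(g ! m has_real_derivative (g ! Suc m) x) (at x within I)"
    if "m < 3" "x \<in> I" for m x
    using inner_deriv[OF that] that(1) unfolding less_3_cases_iff
    by (auto simp: g_def cross_jet_def dot_cross_self)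
  have d_cont: "continuous (at t0 within I) (d m)" for m
    using d[rule_format, OF I(2)] by (rule has_vector_derivative_continuous)
  have g_cont: "continuous (at t0 within I) (g ! 3)"
    unfolding g_def chord_def by (auto intro!: continuous_intros cross_jet_continuous d_cont)
  have "((\<lambda>t. (g ! 0) t / (t - t0)^3) \<longlongrightarrow> (g ! 3) t0 / fact 3) (at t0 within I)"
  proof (rule tendsto_div_power_at_within_interval[OF I])
    show "(g ! m) t0 = 0" if "m < 3" for m
      using that unfolding less_3_cases_iff by (auto simp: g_def chord_def)
  qed (use g_deriv g_cont in auto)
  moreover have "(g ! 3) t0 = - ((d 1 t0 \<times> d 2 t0) \<bullet> d 3 t0)"
    by (simp add: g_def cross_jet_def chord_def inner_add_right dot_cross_self cross3_simps)
  ultimately show ?thesis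
    by (simp add: g_def cross_jet_def chord_def fact_numeral)
qed

lemma circle_meets_line_discriminant:
  fixes a c r e A B :: real
  assumes circle: "a\<^sup>2 + c\<^sup>2 = r\<^sup>2" and line: "e + a * A + (c + r) * B = 0"
  shows "e\<^sup>2 + 2 * r * e * B \<le> r\<^sup>2 * A\<^sup>2"
proof -
  have "(e + r * B)\<^sup>2 = (a * A + c * B)\<^sup>2"
    using line by algebra
  also have "\<dots> \<le> (a\<^sup>2 + c\<^sup>2) * (A\<^sup>2 + B\<^sup>2)"
    using zero_le_power2[of "a * B - c * A"] by (simp add: power2_eq_square algebra_simps)
  also have "\<dots> = r\<^sup>2 * (A\<^sup>2 + B\<^sup>2)"
    by (simp only: circle)
  finally show ?thesis
    by (simp add: power2_eq_square algebra_simps)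
qed

definition osculation_discriminant :: "real set \<Rightarrow> (real \<Rightarrow> real^3) \<Rightarrow> real \<Rightarrow> real \<Rightarrow> real" where
  "osculation_discriminant I f t0 t =
     (let w = vderiv 1 I f t \<times> vderiv 2 I f t;
          e = (f t0 - f t) \<bullet> w
      in (curvature I f t0)\<^sup>2 * e\<^sup>2 + 2 * e * (vderiv 2 I f t0 \<bullet> w) - (vderiv 1 I f t0 \<bullet> w)\<^sup>2)"

lemma osculating_circle_disjoint_osculating_plane:
  fixes f :: "real \<Rightarrow> real^3"
  assumes unit: "norm (vderiv 1 I f t0) = 1"
    and orth: "vderiv 1 I f t0 \<bullet> vderiv 2 I f t0 = 0"
    and curv: "curvature I f t0 > 0"
    and discr: "osculation_discriminant I f t0 t > 0"
  shows "osculating_circle I f t0 \<inter> osculating_plane I f t = {}"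
proof (rule equals0I)
  fix p assume "p \<in> osculating_circle I f t0 \<inter> osculating_plane I f t"
  then obtain a b a' b' where p_circle: "p = f t0 + a *\<^sub>R tangent I f t0 + b *\<^sub>R normal I f t0"
    and on_circle: "dist p (osculating_center I f t0) = 1 / curvature I f t0"
    and p_plane: "p = f t + a' *\<^sub>R tangent I f t + b' *\<^sub>R normal I f t"
    unfolding osculating_circle_def osculating_plane_def by blast
  define k T K N w e where "k = curvature I f t0" and "T = vderiv 1 I f t0"
    and "K = vderiv 2 I f t0" and "N = normal I f t0"
    and "w = vderiv 1 I f t \<times> vderiv 2 I f t" and "e = (f t0 - f t) \<bullet> w"
  have k: "k > 0" "norm K = k"
    using curv by (simp_all add: k_def K_def curvature_def)
  have N: "N = (1 / k) *\<^sub>R K"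
    by (simp add: N_def normal_def k_def K_def)
  have frame: "T \<bullet> T = 1" "T \<bullet> N = 0" "N \<bullet> N = 1"
    using unit orth k by (simp_all add: T_def K_def N norm_eq_1 power2_norm_eq_inner[symmetric]
        power2_eq_square)
  have "p - osculating_center I f t0 = a *\<^sub>R T + (b - 1 / k) *\<^sub>R N"
    by (simp add: p_circle osculating_center_def T_def N_def k_def tangent_def algebra_simps)
  moreover have "(norm (a *\<^sub>R T + (b - 1 / k) *\<^sub>R N))\<^sup>2 = a\<^sup>2 + (b - 1 / k)\<^sup>2"
    unfolding power2_norm_eq_inner
    by (simp add: inner_add_left inner_add_right frame inner_commute[of N T] power2_eq_square)
  ultimately have "a\<^sup>2 + (b - 1 / k)\<^sup>2 = (1 / k)\<^sup>2"
    using on_circle by (simp add: dist_norm k_def)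
  moreover have "(p - f t) \<bullet> w = 0"
    by (simp add: p_plane w_def tangent_def normal_def inner_add_left dot_cross_self)
  then have "e + a * (T \<bullet> w) + ((b - 1 / k) + 1 / k) * (N \<bullet> w) = 0"
    by (simp add: p_circle e_def T_def N_def tangent_def inner_add_left inner_diff_left)
  ultimately have "e\<^sup>2 + 2 * (1 / k) * e * (N \<bullet> w) \<le> (1 / k)\<^sup>2 * (T \<bullet> w)\<^sup>2"
    by (rule circle_meets_line_discriminant)
  then have "k\<^sup>2 * (k\<^sup>2 * e\<^sup>2 + 2 * e * (K \<bullet> w)) \<le> k\<^sup>2 * (T \<bullet> w)\<^sup>2"
    using k(1) by (simp add: N field_simps power2_eq_square)
  then have "k\<^sup>2 * e\<^sup>2 + 2 * e * (K \<bullet> w) \<le> (T \<bullet> w)\<^sup>2"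
    using k(1) by simp
  then have "osculation_discriminant I f t0 t \<le> 0"
    unfolding osculation_discriminant_def Let_def
    unfolding k_def[symmetric] T_def[symmetric] K_def[symmetric] w_def[symmetric] e_def[symmetric]
    by simp
  with discr show False
    by simp
qed

lemma discriminant_div_power_tendsto:
  fixes e A B :: "real \<Rightarrow> real"
  assumes lim_e: "((\<lambda>t. e t / (t - t0)^3) \<longlongrightarrow> - \<tau> / 6) F"
    and lim_A: "((\<lambda>t. A t / (t - t0)^2) \<longlongrightarrow> \<tau> / 2) F"
    and lim_B: "((\<lambda>t. B t / (t - t0)) \<longlongrightarrow> - \<tau>) F"
    and lim_t: "((\<lambda>t. t - t0) \<longlongrightarrow> 0) F"
    and off_t0: "\<forall>\<^sub>F t in F. t \<noteq> t0"
  shows "((\<lambda>t. (k\<^sup>2 * (e t)\<^sup>2 + 2 * e t * B t - (A t)\<^sup>2) / (t - t0)^4) \<longlongrightarrow> \<tau>\<^sup>2 / 12) F"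
proof -
  have "((\<lambda>t. k\<^sup>2 * (e t / (t - t0)^3)\<^sup>2 * (t - t0)\<^sup>2 + 2 * (e t / (t - t0)^3) * (B t / (t - t0))
              - (A t / (t - t0)^2)\<^sup>2)
          \<longlongrightarrow> k\<^sup>2 * (- \<tau> / 6)\<^sup>2 * 0\<^sup>2 + 2 * (- \<tau> / 6) * (- \<tau>) - (\<tau> / 2)\<^sup>2) F"
    by (intro tendsto_intros lim_e lim_A lim_B lim_t)
  also have "k\<^sup>2 * (- \<tau> / 6)\<^sup>2 * 0\<^sup>2 + 2 * (- \<tau> / 6) * (- \<tau>) - (\<tau> / 2)\<^sup>2 = \<tau>\<^sup>2 / 12"
    by (simp add: power2_eq_square field_simps)
  finally show ?thesis
  proof (rule Lim_transform_eventually)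
    have rescale: "k\<^sup>2 * (E / s^3)\<^sup>2 * s\<^sup>2 + 2 * (E / s^3) * (B' / s) - (A' / s^2)\<^sup>2
        = (k\<^sup>2 * E\<^sup>2 + 2 * E * B' - A'\<^sup>2) / s^4" if "s \<noteq> 0" for s E A' B' :: real
      using that by (simp add: field_simps power2_eq_square eval_nat_numeral)
    show "\<forall>\<^sub>F t in F. k\<^sup>2 * (e t / (t - t0)^3)\<^sup>2 * (t - t0)\<^sup>2 + 2 * (e t / (t - t0)^3) * (B t / (t - t0))
        - (A t / (t - t0)^2)\<^sup>2 = (k\<^sup>2 * (e t)\<^sup>2 + 2 * e t * B t - (A t)\<^sup>2) / (t - t0)^4"
      using off_t0 by eventually_elim (rule rescale, simp)
  qed
qed

lemma osculation_discriminant_tendsto: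
  fixes \<xi> :: "real \<Rightarrow> real^3"
  assumes I: "is_interval I" "t0 \<in> I" and smooth: "smooth_curve_on I \<xi>"
  shows "((\<lambda>t. osculation_discriminant I \<xi> t0 t / (t - t0)^4)
           \<longlongrightarrow> ((vderiv 1 I \<xi> t0 \<times> vderiv 2 I \<xi> t0) \<bullet> vderiv 3 I \<xi> t0)\<^sup>2 / 12) (at t0 within I)"
proof -
  define d where "d m = vderiv m I \<xi>" for m
  have d: "\<forall>m. \<forall>t\<in>I. (d m has_vector_derivative d (Suc m) t) (at t within I)"
    using smooth unfolding smooth_curve_on_def d_def .
  have "d 0 = \<xi>"
    by (simp add: d_def)
  then have chord: "((\<lambda>t. (\<xi> t0 - \<xi> t) \<bullet> (d 1 t \<times> d 2 t) / (t - t0)^3)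
               \<longlongrightarrow> - ((d 1 t0 \<times> d 2 t0) \<bullet> d 3 t0) / 6) (at t0 within I)"
    using cross_chain_inner_chord_tendsto[OF I d] by simp
  have "((\<lambda>t. t - t0) \<longlongrightarrow> 0) (at t0 within I)"
    by (intro tendsto_eq_intros) auto
  moreover have "\<forall>\<^sub>F t in at t0 within I. t \<noteq> t0"
    by (simp add: eventually_at_filter)
  ultimately show ?thesis
    unfolding osculation_discriminant_def Let_def d_def[symmetric]
    by (rule discriminant_div_power_tendsto[OF chord cross_chain_inner_frame_tendsto[OF I d]])
qed

lemma eventually_osculating_circle_disjoint_osculating_plane:
  fixes \<xi> :: "real \<Rightarrow> real^3"
  assumes I: "is_interval I" "t0 \<in> I" and smooth: "smooth_curve_on I \<xi>"
    and arclength: "arclength_param I \<xi>"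
    and curv: "curvature I \<xi> t0 > 0" and tors: "torsion I \<xi> t0 \<noteq> 0"
  shows "\<forall>\<^sub>F t in at t0 within I. osculating_circle I \<xi> t0 \<inter> osculating_plane I \<xi> t = {}"
proof (cases "at t0 within I = bot")
  case False
  have unit: "norm (vderiv 1 I \<xi> t) = 1" if "t \<in> I" for t
    using arclength that by (simp add: arclength_param_def)
  have "(vderiv 1 I \<xi> has_vector_derivative vderiv 2 I \<xi> t0) (at t0 within I)"
    using smooth I(2) unfolding smooth_curve_on_def by (metis Suc_1)
  then have orth: "vderiv 1 I \<xi> t0 \<bullet> vderiv 2 I \<xi> t0 = 0"
    using inner_unit_vector_derivative_eq_0 unit I(2) False by blast
  have "((vderiv 1 I \<xi> t0 \<times> vderiv 2 I \<xi> t0) \<bullet> vderiv 3 I \<xi> t0)\<^sup>2 / 12 > 0"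
    using tors by (simp add: torsion_def)
  then have "\<forall>\<^sub>F t in at t0 within I. osculation_discriminant I \<xi> t0 t / (t - t0)^4 > 0"
    by (rule order_tendstoD(1)[OF osculation_discriminant_tendsto[OF I smooth]])
  then have "\<forall>\<^sub>F t in at t0 within I. osculation_discriminant I \<xi> t0 t > 0"
    by eventually_elim (simp add: zero_less_divide_iff)
  then show ?thesis
    by (rule eventually_mono)
      (rule osculating_circle_disjoint_osculating_plane[OF unit[OF I(2)] orth curv])
qed simp

theorem mainTheorem10:
  fixes \<xi> :: "real \<Rightarrow> real^3" and I :: "real set" and t0 :: real
  assumes "is_interval I"
    and "smooth_curve_on I \<xi>"
    and "arclength_param I \<xi>"
    and "\<forall>t\<in>I. curvature I \<xi> t > 0"
    and "\<forall>t\<in>I. torsion I \<xi> t \<noteq> 0"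
    and "t0 \<in> I"
  shows "\<exists>\<delta>>0. \<forall>t\<in>I. 0 < \<bar>t - t0\<bar> \<and> \<bar>t - t0\<bar> < \<delta> \<longrightarrow>
           osculating_circle I \<xi> t0 \<inter> osculating_plane I \<xi> t = {} \<and>
           osculating_circle I \<xi> t0 \<inter> osculating_disk I \<xi> t = {}"
proof -
  have "\<forall>\<^sub>F t in at t0 within I. osculating_circle I \<xi> t0 \<inter> osculating_plane I \<xi> t = {}"
    using assms by (intro eventually_osculating_circle_disjoint_osculating_plane) auto
  then obtain \<delta> where "\<delta> > 0"
    and \<delta>: "\<And>t. t \<in> I \<Longrightarrow> t \<noteq> t0 \<Longrightarrow> dist t t0 < \<delta> \<Longrightarrow>
             osculating_circle I \<xi> t0 \<inter> osculating_plane I \<xi> t = {}"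
    unfolding eventually_at by blast
  have "osculating_disk I \<xi> t \<subseteq> osculating_plane I \<xi> t" for t
    unfolding osculating_disk_def by blast
  with \<open>\<delta> > 0\<close> \<delta> show ?thesis
    by (intro exI[of _ \<delta>]) (auto simp: dist_real_def)
qed

end
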